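(* Let $\mathcal{H} = (\mathbb{C}^2)^{\otimes k}$ be the space of $k = O(1)$ qubits and let $H = J\bigotimes_{i=1}^k Z_i$ with $J > 0$, where $Z_i$ is the Pauli $Z$ on qubit $i$. Suppose $(H',\mathcal{A})$ is an $(\eta,\epsilon)$-gadget for $H$, where $H'$ is a $k'$-local Hamiltonian with $k' < k$. Then, provided $\epsilon < 2^{-k'}J$, the gadget must satisfy $$\|H'\| \ge \frac{2^{-k'}J - \epsilon}{\eta} = \Omega(\eta^{-1}).$$
   Context: $\|\cdot\|$ is the operator norm. The ancillary space $\mathcal{A}$ is a tensor product of sites, and $H'$ being $k'$-local means $H'$ is a sum of terms each acting nontrivially on at most $k'$ sites among the $k$ qubits of $\mathcal{H}$ and the sites of $\mathcal{A}$. $(H',\mathcal{A})$ is an $(\eta,\epsilon)$-gadget for $H$ if there exist an orthogonal projector $P \ne 0$ on $\mathcal{A}$ and a unitary $U$ on $\mathcal{H}\otimes\mathcal{A}$ with $\|U - \mathbb{I}\| \le \eta$ and $\|P'H'P' - U(H\otimes P)U^\dagger\| \le \epsilon$, where $P' = U(\mathbb{I}\otimes P)U^\dagger$. *)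

theory Defs
  imports Complex_Main
begin

text \<open>
Finite-dimensional quantum systems built from sites 0,...,n-1; site i has local
dimension d i. Sites 0,...,k-1 are the k qubits of H (d i = 2), sites k,...,n-1
are the sites of the ancilla space A. A basis configuration is a function
c :: nat => nat with c i < d i for i < n and c i = 0 for i >= n; the total
Hilbert space is l2 of the finite set of configurations, i.e.
(C^2)^{tensor k} tensor A.
\<close>

type_synonym conf = "nat \<Rightarrow> nat"
type_synonym op = "conf \<Rightarrow> conf \<Rightarrow> complex"

definition confs :: "nat \<Rightarrow> (nat \<Rightarrow> nat) \<Rightarrow> conf set" where
  "confs n d = {c. (\<forall>i<n. c i < d i) \<and> (\<forall>i\<ge>n. c i = 0)}"

definition op_mul :: "conf set \<Rightarrow> op \<Rightarrow> op \<Rightarrow> op" where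
  "op_mul X A B = (\<lambda>c c'. \<Sum>e\<in>X. A c e * B e c')"

definition op_adj :: "op \<Rightarrow> op" where
  "op_adj A = (\<lambda>c c'. cnj (A c' c))"

definition op_id :: op where
  "op_id = (\<lambda>c c'. if c = c' then 1 else 0)"

definition op_diff :: "op \<Rightarrow> op \<Rightarrow> op" where
  "op_diff A B = (\<lambda>c c'. A c c' - B c c')"

definition op_eq :: "conf set \<Rightarrow> op \<Rightarrow> op \<Rightarrow> bool" where
  "op_eq X A B \<longleftrightarrow> (\<forall>c\<in>X. \<forall>c'\<in>X. A c c' = B c c')"

definition op_apply :: "conf set \<Rightarrow> op \<Rightarrow> (conf \<Rightarrow> complex) \<Rightarrow> (conf \<Rightarrow> complex)" where
  "op_apply X A v = (\<lambda>c. \<Sum>c'\<in>X. A c c' * v c')"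

definition vec_norm :: "conf set \<Rightarrow> (conf \<Rightarrow> complex) \<Rightarrow> real" where
  "vec_norm X v = sqrt (\<Sum>c\<in>X. (cmod (v c))\<^sup>2)"

definition op_norm :: "conf set \<Rightarrow> op \<Rightarrow> real" where
  "op_norm X A = Sup {vec_norm X (op_apply X A v) | v. vec_norm X v \<le> 1}"

definition op_hermitian :: "conf set \<Rightarrow> op \<Rightarrow> bool" where
  "op_hermitian X A \<longleftrightarrow> op_eq X (op_adj A) A"

definition op_unitary :: "conf set \<Rightarrow> op \<Rightarrow> bool" where
  "op_unitary X U \<longleftrightarrow> op_eq X (op_mul X U (op_adj U)) op_id \<and> op_eq X (op_mul X (op_adj U) U) op_id"

text \<open>A acts nontrivially only on the sites in S (S a subset of the sites {..<n}):
 A = A_S tensor identity on the remaining sites.\<close>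
definition acts_within :: "nat \<Rightarrow> (nat \<Rightarrow> nat) \<Rightarrow> nat set \<Rightarrow> op \<Rightarrow> bool" where
  "acts_within n d S A \<longleftrightarrow>
     (\<exists>f :: conf \<Rightarrow> conf \<Rightarrow> complex. \<forall>c\<in>confs n d. \<forall>c'\<in>confs n d.
        A c c' = (if (\<forall>i\<in>{..<n} - S. c i = c' i)
                  then f (\<lambda>i. if i \<in> S then c i else 0) (\<lambda>i. if i \<in> S then c' i else 0)
                  else 0))"

definition k_local_hamiltonian :: "nat \<Rightarrow> (nat \<Rightarrow> nat) \<Rightarrow> nat \<Rightarrow> op \<Rightarrow> bool" where
  "k_local_hamiltonian n d k' H \<longleftrightarrow>
     op_hermitian (confs n d) H \<and>
     (\<exists>(m::nat) (h::nat \<Rightarrow> op) (S::nat \<Rightarrow> nat set).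
        (\<forall>j<m. S j \<subseteq> {..<n} \<and> card (S j) \<le> k' \<and> acts_within n d (S j) (h j)) \<and>
        op_eq (confs n d) H (\<lambda>c c'. \<Sum>j<m. h j c c'))"

definition ancilla_projector :: "nat \<Rightarrow> (nat \<Rightarrow> nat) \<Rightarrow> nat \<Rightarrow> op \<Rightarrow> bool" where
  "ancilla_projector n d k P \<longleftrightarrow>
     acts_within n d {k..<n} P \<and>
     op_eq (confs n d) (op_mul (confs n d) P P) P \<and>
     op_hermitian (confs n d) P \<and>
     \<not> op_eq (confs n d) P (\<lambda>_ _. 0)"

text \<open>(H',A) is an (eta,epsilon)-gadget for H; here Hext = H tensor I_A, so that
 H tensor P = Hext * (I tensor P).\<close>
definition is_gadget :: "nat \<Rightarrow> (nat \<Rightarrow> nat) \<Rightarrow> nat \<Rightarrow> op \<Rightarrow> op \<Rightarrow> real \<Rightarrow> real \<Rightarrow> bool" where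
  "is_gadget n d k Hext H' \<eta> \<epsilon> \<longleftrightarrow>
     (let X = confs n d in
      \<exists>P U. ancilla_projector n d k P \<and> op_unitary X U \<and>
        op_norm X (op_diff U op_id) \<le> \<eta> \<and>
        (let P' = op_mul X (op_mul X U P) (op_adj U) in
         op_norm X (op_diff (op_mul X (op_mul X P' H') P')
                            (op_mul X (op_mul X U (op_mul X Hext P)) (op_adj U))) \<le> \<epsilon>))"

text \<open>H = J Z_1 tensor ... tensor Z_k on the k qubits (sites 0..k-1), extended by the
 identity on the ancilla; Z|0> = |0>, Z|1> = -|1>.\<close>
definition ZZ_ham :: "nat \<Rightarrow> real \<Rightarrow> op" where
  "ZZ_ham k J = (\<lambda>c c'. if c = c' then complex_of_real (J * (\<Prod>i<k. if c i = 0 then 1 else -1)) else 0)"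

end

theory Submission
  imports Defs "HOL-Analysis.L2_Norm" "HOL-Library.FuncSet" "HOL-Library.Disjoint_Sets"
begin

text \<open>
For a configuration c let v c = P|c> be the corresponding column of the ancilla projector P.
Since v c lies in the range of P, the gadget condition puts the energy of U v c under H' within
\<epsilon> |v c|^2 of the energy J z(c) |v c|^2 of v c under H, where z(c) = +-1 is the Z-parity of the
qubits; replacing U v c by v c costs at most 2 \<eta> |H'| |v c|^2. Every term of H' misses one of
the k qubits, and flipping that qubit preserves the expectation of the term in v c but reverses
z(c). Summed over the configurations with a fixed ancilla part, z(c) <v c, H' v c> therefore
cancels, so for some c the sign of <v c, H' v c> opposes z(c). This yields J \<le> \<epsilon> + 2 \<eta> |H'|,
which implies the claim for k' \<ge> 1 because J / 2^k' \<le> J / 2. A 0-local H' is a scalar, so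
the replacement costs nothing and J \<le> \<epsilon>, contradicting the hypothesis.
\<close>

section \<open>Vectors and operators on a finite configuration space\<close>

definition vec_inner :: "conf set \<Rightarrow> (conf \<Rightarrow> complex) \<Rightarrow> (conf \<Rightarrow> complex) \<Rightarrow> complex" where
  "vec_inner X u w = (\<Sum>c\<in>X. cnj (u c) * w c)"

definition column :: "op \<Rightarrow> conf \<Rightarrow> conf \<Rightarrow> complex" where
  "column A c = (\<lambda>a. A a c)"

lemma finite_confs: "finite (confs n d)"
proof -
  have "confs n d \<subseteq> (\<lambda>f i. if i < n then f i else 0) ` (PiE {..<n} (\<lambda>i. {..<d i}))"
  proof
    fix c assume c: "c \<in> confs n d"
    have "c = (\<lambda>i. if i < n then restrict c {..<n} i else 0)"
      using c unfolding confs_def by auto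
    moreover have "restrict c {..<n} \<in> PiE {..<n} (\<lambda>i. {..<d i})"
      using c unfolding confs_def by auto
    ultimately show "c \<in> (\<lambda>f i. if i < n then f i else 0) ` (PiE {..<n} (\<lambda>i. {..<d i}))"
      by blast
  qed
  moreover have "finite (PiE {..<n} (\<lambda>i. {..<d i}))" by (intro finite_PiE) auto
  ultimately show ?thesis using finite_subset by blast
qed

lemma op_apply_op_mul: "op_apply X (op_mul X A B) v = op_apply X A (op_apply X B v)"
  unfolding op_apply_def op_mul_def
  by (auto simp: sum_distrib_left sum_distrib_right mult.assoc intro!: sum.swap[THEN trans])

lemma vec_inner_op_apply: "vec_inner X u (op_apply X A w) = vec_inner X (op_apply X (op_adj A) u) w"
  unfolding vec_inner_def op_apply_def op_adj_def
  by (auto simp: sum_distrib_left sum_distrib_right mult_ac intro!: sum.swap[THEN trans])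

lemma op_adj_op_adj [simp]: "op_adj (op_adj A) = A"
  unfolding op_adj_def by simp

lemma op_apply_cong: "(\<And>c. c \<in> X \<Longrightarrow> v c = w c) \<Longrightarrow> op_apply X A v = op_apply X A w"
  unfolding op_apply_def by (auto intro!: sum.cong)

lemma op_apply_op_eq: "op_eq X A B \<Longrightarrow> c \<in> X \<Longrightarrow> op_apply X A v c = op_apply X B v c"
  unfolding op_apply_def op_eq_def by (auto intro!: sum.cong)

lemma vec_inner_cong:
  "(\<And>c. c \<in> X \<Longrightarrow> u c = u' c) \<Longrightarrow> (\<And>c. c \<in> X \<Longrightarrow> v c = w c) \<Longrightarrow> vec_inner X u v = vec_inner X u' w"
  unfolding vec_inner_def by (auto intro!: sum.cong)

lemma op_apply_diagonal:
  assumes "finite X" "a \<in> X" "\<forall>a\<in>X. \<forall>b\<in>X. A a b = (if a = b then f a else 0)"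
  shows "op_apply X A w a = f a * w a"
proof -
  have "op_apply X A w a = (\<Sum>b\<in>X. if a = b then f a * w b else 0)"
    unfolding op_apply_def using assms(2,3) by (intro sum.cong) auto
  then show ?thesis using assms(1,2) by simp
qed

lemma op_apply_op_id: "finite X \<Longrightarrow> c \<in> X \<Longrightarrow> op_apply X op_id v c = v c"
  using op_apply_diagonal[of X c op_id "\<lambda>_. 1"] unfolding op_id_def by simp

lemma op_apply_op_diff: "op_apply X (op_diff A B) v = (\<lambda>c. op_apply X A v c - op_apply X B v c)"
  unfolding op_apply_def op_diff_def by (simp add: left_diff_distrib sum_subtractf)

lemma op_apply_diff: "op_apply X A (\<lambda>c. v c - w c) = (\<lambda>c. op_apply X A v c - op_apply X A w c)"
  unfolding op_apply_def by (simp add: right_diff_distrib sum_subtractf)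

lemma op_apply_scale: "op_apply X A (\<lambda>c. a * v c) = (\<lambda>c. a * op_apply X A v c)"
  unfolding op_apply_def by (auto simp: sum_distrib_left mult_ac)

lemma op_apply_sum: "op_apply X (\<lambda>a b. \<Sum>j<m. h j a b) v a = (\<Sum>j<m. op_apply X (h j) v a)"
  unfolding op_apply_def by (simp add: sum_distrib_right sum.swap[of _ "{..<m}"])

lemma vec_inner_diff_right: "vec_inner X u (\<lambda>c. v c - w c) = vec_inner X u v - vec_inner X u w"
  unfolding vec_inner_def by (simp add: right_diff_distrib sum_subtractf)

lemma vec_inner_diff_left: "vec_inner X (\<lambda>c. v c - w c) u = vec_inner X v u - vec_inner X w u"
  unfolding vec_inner_def by (simp add: left_diff_distrib sum_subtractf)

lemma vec_inner_scale_right: "vec_inner X u (\<lambda>a. l * w a) = l * vec_inner X u w"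
  unfolding vec_inner_def by (simp add: sum_distrib_left mult_ac)

lemma vec_inner_sum_right: "vec_inner X u (\<lambda>a. \<Sum>j<m. w j a) = (\<Sum>j<m. vec_inner X u (w j))"
  unfolding vec_inner_def by (simp add: sum_distrib_left sum.swap[of _ "{..<m}"])

lemma vec_norm_eq_L2_set: "vec_norm X v = L2_set (\<lambda>c. cmod (v c)) X"
  unfolding vec_norm_def L2_set_def by simp

lemma vec_norm_nonneg: "0 \<le> vec_norm X v"
  unfolding vec_norm_def by (simp add: sum_nonneg)

lemma vec_norm_cong: "(\<And>c. c \<in> X \<Longrightarrow> u c = w c) \<Longrightarrow> vec_norm X u = vec_norm X w"
  unfolding vec_norm_def by (simp cong: sum.cong)

lemma vec_norm_scale: "vec_norm X (\<lambda>c. a * v c) = cmod a * vec_norm X v"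
  unfolding vec_norm_eq_L2_set by (simp add: norm_mult L2_set_right_distrib)

lemma vec_inner_self: "vec_inner X v v = of_real ((vec_norm X v)\<^sup>2)"
proof -
  have "vec_inner X v v = (\<Sum>c\<in>X. of_real ((cmod (v c))\<^sup>2))"
    unfolding vec_inner_def by (intro sum.cong refl) (metis complex_norm_square mult.commute)
  then show ?thesis unfolding vec_norm_def by (simp add: sum_nonneg)
qed

lemma cmod_vec_inner_le: "cmod (vec_inner X u w) \<le> vec_norm X u * vec_norm X w"
proof -
  have "cmod (vec_inner X u w) \<le> (\<Sum>c\<in>X. cmod (cnj (u c) * w c))"
    unfolding vec_inner_def by (rule norm_sum)
  also have "\<dots> = (\<Sum>c\<in>X. \<bar>cmod (u c)\<bar> * \<bar>cmod (w c)\<bar>)" by (simp add: norm_mult)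
  also have "\<dots> \<le> vec_norm X u * vec_norm X w" unfolding vec_norm_eq_L2_set by (rule L2_set_mult_ineq)
  finally show ?thesis .
qed

lemma bdd_above_op_norm:
  assumes "finite X"
  shows "bdd_above {vec_norm X (op_apply X A v) | v. vec_norm X v \<le> 1}"
proof (rule bdd_aboveI)
  fix y assume "y \<in> {vec_norm X (op_apply X A v) | v. vec_norm X v \<le> 1}"
  then obtain v where v: "vec_norm X v \<le> 1" and y: "y = vec_norm X (op_apply X A v)" by auto
  have entry: "cmod (v c) \<le> 1" if "c \<in> X" for c
    using member_le_L2_set[OF assms that, of "\<lambda>c. cmod (v c)"] v by (simp add: vec_norm_eq_L2_set)
  have "y \<le> (\<Sum>c\<in>X. cmod (op_apply X A v c))"
    unfolding y vec_norm_eq_L2_set by (rule L2_set_le_sum) simp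
  also have "\<dots> \<le> (\<Sum>c\<in>X. \<Sum>c'\<in>X. cmod (A c c' * v c'))"
    unfolding op_apply_def by (intro sum_mono norm_sum)
  also have "\<dots> \<le> (\<Sum>c\<in>X. \<Sum>c'\<in>X. cmod (A c c'))"
    using entry by (intro sum_mono) (simp add: norm_mult mult_left_le)
  finally show "y \<le> (\<Sum>c\<in>X. \<Sum>c'\<in>X. cmod (A c c'))" .
qed

lemma op_norm_upper: "finite X \<Longrightarrow> vec_norm X v \<le> 1 \<Longrightarrow> vec_norm X (op_apply X A v) \<le> op_norm X A"
  unfolding op_norm_def by (rule cSup_upper) (auto intro: bdd_above_op_norm)

lemma op_norm_nonneg:
  assumes "finite X"
  shows "0 \<le> op_norm X A"
proof -
  have "vec_norm X (\<lambda>_. 0) \<le> 1" by (simp add: vec_norm_def)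
  then show ?thesis using vec_norm_nonneg op_norm_upper[OF assms] order_trans by blast
qed

lemma vec_norm_op_apply_le:
  assumes "finite X"
  shows "vec_norm X (op_apply X A v) \<le> op_norm X A * vec_norm X v"
proof (cases "vec_norm X v = 0")
  case True
  then have "op_apply X A v = op_apply X A (\<lambda>_. 0)"
    using assms by (intro op_apply_cong) (simp add: vec_norm_eq_L2_set L2_set_eq_0_iff)
  then show ?thesis using True by (simp add: op_apply_def vec_norm_def)
next
  case False
  define t where "t = vec_norm X v"
  have t: "t > 0" using False vec_norm_nonneg t_def by (metis less_eq_real_def)
  have "vec_norm X (\<lambda>c. complex_of_real (1/t) * v c) = 1"
    using t unfolding vec_norm_scale by (simp add: t_def[symmetric] norm_divide)
  then have "vec_norm X (op_apply X A (\<lambda>c. complex_of_real (1/t) * v c)) \<le> op_norm X A"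
    using assms by (intro op_norm_upper) auto
  then have "(1/t) * vec_norm X (op_apply X A v) \<le> op_norm X A"
    using t unfolding op_apply_scale vec_norm_scale by (simp add: norm_divide)
  then show ?thesis using t unfolding t_def[symmetric] by (simp add: field_simps)
qed

lemma cmod_expectation_le:
  "finite X \<Longrightarrow> cmod (vec_inner X v (op_apply X A v)) \<le> op_norm X A * (vec_norm X v)\<^sup>2"
  using order_trans[OF cmod_vec_inner_le mult_left_mono[OF vec_norm_op_apply_le vec_norm_nonneg]]
  by (simp add: power2_eq_square mult_ac)

lemma cmod_expectation_diff_le:
  assumes "finite X"
  shows "cmod (vec_inner X x (op_apply X A x) - vec_inner X v (op_apply X A v))
         \<le> op_norm X A * (vec_norm X x + vec_norm X v) * vec_norm X (\<lambda>a. x a - v a)"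
proof -
  let ?e = "\<lambda>a. x a - v a"
  have split: "vec_inner X x (op_apply X A x) - vec_inner X v (op_apply X A v)
             = vec_inner X x (op_apply X A ?e) + vec_inner X ?e (op_apply X A v)"
    by (simp add: op_apply_diff vec_inner_diff_right vec_inner_diff_left)
  have bound: "cmod (vec_inner X u (op_apply X A w)) \<le> op_norm X A * vec_norm X u * vec_norm X w" for u w
    using order_trans[OF cmod_vec_inner_le mult_left_mono[OF vec_norm_op_apply_le[OF assms] vec_norm_nonneg]]
    by (simp add: mult_ac)
  have "cmod (vec_inner X x (op_apply X A ?e) + vec_inner X ?e (op_apply X A v))
      \<le> op_norm X A * vec_norm X x * vec_norm X ?e + op_norm X A * vec_norm X ?e * vec_norm X v"
    by (intro order_trans[OF norm_triangle_ineq] add_mono bound)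
  then show ?thesis unfolding split by (simp add: algebra_simps)
qed

lemma unitary_adj_apply:
  "finite X \<Longrightarrow> op_unitary X U \<Longrightarrow> c \<in> X \<Longrightarrow> op_apply X (op_adj U) (op_apply X U v) c = v c"
  unfolding op_unitary_def by (metis op_apply_op_mul op_apply_op_eq op_apply_op_id)

lemma unitary_vec_norm:
  assumes "finite X" "op_unitary X U"
  shows "vec_norm X (op_apply X U v) = vec_norm X v"
proof -
  have "vec_inner X (op_apply X U v) (op_apply X U v) = vec_inner X v v"
    unfolding vec_inner_op_apply[of X "op_apply X U v"]
    using unitary_adj_apply[OF assms] by (intro vec_inner_cong) auto
  then have "(vec_norm X (op_apply X U v))\<^sup>2 = (vec_norm X v)\<^sup>2"
    unfolding vec_inner_self of_real_eq_iff .
  then show ?thesis using vec_norm_nonneg by simp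
qed

lemma nonzero_op_column:
  assumes "finite X" "\<not> op_eq X A (\<lambda>_ _. 0)"
  obtains c where "c \<in> X" "0 < vec_norm X (column A c)"
proof -
  obtain a c where "a \<in> X" "c \<in> X" "A a c \<noteq> 0" using assms(2) unfolding op_eq_def by auto
  then have "vec_norm X (column A c) \<noteq> 0"
    using assms(1) by (auto simp: vec_norm_eq_L2_set L2_set_eq_0_iff column_def)
  then show ?thesis using that \<open>c \<in> X\<close> vec_norm_nonneg by (metis less_eq_real_def)
qed

lemma projector_column:
  "op_eq X (op_mul X P P) P \<Longrightarrow> c \<in> X \<Longrightarrow> a \<in> X \<Longrightarrow> op_apply X P (column P c) a = column P c a"
  unfolding op_apply_def op_mul_def column_def op_eq_def by auto

lemma vec_inner_projector_column:
  assumes "op_hermitian X P" "op_eq X (op_mul X P P) P" "c \<in> X"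
  shows "vec_inner X (column P c) (column P c) = P c c"
proof -
  have "vec_inner X (column P c) (column P c) = (\<Sum>a\<in>X. P c a * P a c)"
    unfolding vec_inner_def column_def
    using assms(1,3) unfolding op_hermitian_def op_eq_def op_adj_def by (intro sum.cong) auto
  also have "\<dots> = P c c" using assms(2,3) unfolding op_eq_def op_mul_def by auto
  finally show ?thesis .
qed

lemma gadget_expectation:
  fixes X :: "conf set" and U P P' H' Hext M :: op and v :: "conf \<Rightarrow> complex" and \<epsilon> :: real
  defines "P' \<equiv> op_mul X (op_mul X U P) (op_adj U)"
    and "M \<equiv> op_diff (op_mul X (op_mul X P' H') P') (op_mul X (op_mul X U (op_mul X Hext P)) (op_adj U))"
  assumes X: "finite X" and U: "op_unitary X U" and P: "op_hermitian X P"
    and gap: "op_norm X M \<le> \<epsilon>"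
    and Pv: "\<forall>a\<in>X. op_apply X P v a = v a"
  shows "cmod (vec_inner X (op_apply X U v) (op_apply X H' (op_apply X U v))
               - vec_inner X v (op_apply X Hext v)) \<le> \<epsilon> * (vec_norm X v)\<^sup>2"
proof -
  define x where "x = op_apply X U v"
  have adj_x: "op_apply X (op_adj U) x a = v a" if "a \<in> X" for a
    unfolding x_def using unitary_adj_apply[OF X U that] .
  have P_adj_x: "op_apply X P (op_apply X (op_adj U) x) = op_apply X P v"
    using adj_x by (rule op_apply_cong)
  have P_v: "op_apply X B (op_apply X P v) = op_apply X B v" for B
    using Pv by (intro op_apply_cong) simp
  have apply_P': "op_apply X P' w = op_apply X U (op_apply X P (op_apply X (op_adj U) w))" for w
    unfolding P'_def by (simp add: op_apply_op_mul)
  have P'_x: "op_apply X P' x = x"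
    unfolding apply_P' P_adj_x P_v x_def[symmetric] ..
  have "op_apply X (op_adj P) (op_apply X (op_adj U) x) a = v a" if "a \<in> X" for a
    using op_apply_op_eq[OF P[unfolded op_hermitian_def] that] P_adj_x Pv that by simp
  then have "op_apply X U (op_apply X (op_adj P) (op_apply X (op_adj U) x)) = x"
    unfolding x_def by (rule op_apply_cong)
  then have P'_left: "vec_inner X x (op_apply X P' w) = vec_inner X x w" for w
    unfolding apply_P' vec_inner_op_apply op_adj_op_adj by simp
  have compressed: "vec_inner X x (op_apply X (op_mul X (op_mul X P' H') P') x) = vec_inner X x (op_apply X H' x)"
    by (simp add: op_apply_op_mul P'_x P'_left)
  have conjugated: "vec_inner X x (op_apply X (op_mul X (op_mul X U (op_mul X Hext P)) (op_adj U)) x)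
                  = vec_inner X v (op_apply X Hext v)"
    unfolding op_apply_op_mul vec_inner_op_apply[of X x U] P_adj_x P_v
    using adj_x by (intro vec_inner_cong) auto
  have "vec_inner X x (op_apply X M x) = vec_inner X x (op_apply X H' x) - vec_inner X v (op_apply X Hext v)"
    unfolding M_def op_apply_op_diff vec_inner_diff_right compressed conjugated ..
  then have "cmod (vec_inner X x (op_apply X H' x) - vec_inner X v (op_apply X Hext v))
      \<le> op_norm X M * (vec_norm X x)\<^sup>2"
    using cmod_expectation_le[OF X, of x M] by simp
  also have "\<dots> \<le> \<epsilon> * (vec_norm X v)\<^sup>2"
    unfolding x_def unitary_vec_norm[OF X U] by (intro mult_right_mono gap) simp
  finally show ?thesis unfolding x_def .
qed

section \<open>Local operators and the Z-parity\<close>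

definition flip :: "nat \<Rightarrow> conf \<Rightarrow> conf" where
  "flip i c = c(i := 1 - c i)"

lemma flip_in_confs: "i < n \<Longrightarrow> d i = 2 \<Longrightarrow> c \<in> confs n d \<Longrightarrow> flip i c \<in> confs n d"
  unfolding confs_def flip_def by auto

lemma flip_flip: "i < n \<Longrightarrow> d i = 2 \<Longrightarrow> c \<in> confs n d \<Longrightarrow> flip i (flip i c) = c"
  unfolding confs_def flip_def by auto

lemma flip_neq: "flip i c \<noteq> c"
proof
  assume "flip i c = c"
  then have "1 - c i = c i" unfolding flip_def by (metis fun_upd_same)
  then show False by arith
qed

lemma acts_within_flip:
  assumes "acts_within n d S A" "i < n" "i \<notin> S" "d i = 2" "a \<in> confs n d" "b \<in> confs n d"
  shows "A (flip i a) (flip i b) = A a b"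
proof -
  obtain f where f: "\<forall>c\<in>confs n d. \<forall>c'\<in>confs n d.
        A c c' = (if (\<forall>i\<in>{..<n} - S. c i = c' i)
                  then f (\<lambda>i. if i \<in> S then c i else 0) (\<lambda>i. if i \<in> S then c' i else 0)
                  else 0)" using assms(1) unfolding acts_within_def by blast
  have "(\<lambda>j. if j \<in> S then flip i c j else 0) = (\<lambda>j. if j \<in> S then c j else 0)" for c
    using assms(3) unfolding flip_def by auto
  moreover have "a i < 2" "b i < 2" using assms(2,4,5,6) unfolding confs_def by auto
  then have "flip i a j = flip i b j \<longleftrightarrow> a j = b j" for j
    unfolding flip_def by auto
  ultimately show ?thesis
    using f assms(5,6) flip_in_confs[of i n d] assms(2,4) by simp
qed

lemma acts_within_off_support:
  "acts_within n d S A \<Longrightarrow> a \<in> confs n d \<Longrightarrow> b \<in> confs n d \<Longrightarrow> A a b \<noteq> 0 \<Longrightarrow> j < n \<Longrightarrow> j \<notin> S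
   \<Longrightarrow> a j = b j"
  unfolding acts_within_def by (metis (no_types, lifting) Diff_iff lessThan_iff)

lemma acts_within_diag_eq:
  assumes "acts_within n d S A" "a \<in> confs n d" "b \<in> confs n d" "\<forall>j\<in>S. a j = b j"
  shows "A a a = A b b"
proof -
  have "(\<lambda>i. if i \<in> S then a i else 0) = (\<lambda>i. if i \<in> S then b i else 0)"
    using assms(4) by auto
  then show ?thesis using assms(1-3) unfolding acts_within_def by force
qed

lemma acts_within_empty:
  assumes "acts_within n d {} A"
  obtains l where "\<forall>a\<in>confs n d. \<forall>b\<in>confs n d. A a b = (if a = b then l else 0)"
proof -
  obtain f where f: "\<forall>c\<in>confs n d. \<forall>c'\<in>confs n d.
        A c c' = (if (\<forall>i\<in>{..<n} - {}. c i = c' i)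
                  then f (\<lambda>i. if i \<in> {} then c i else 0) (\<lambda>i. if i \<in> {} then c' i else 0)
                  else 0)" using assms unfolding acts_within_def by blast
  have "\<forall>a\<in>confs n d. \<forall>b\<in>confs n d. (\<forall>i\<in>{..<n} - {}. a i = b i) \<longleftrightarrow> a = b"
    unfolding confs_def by (auto intro!: ext) (metis lessThan_iff not_le)
  then show ?thesis using f by (intro that[of "f (\<lambda>i. 0) (\<lambda>i. 0)"]) auto
qed

lemma zero_local_hamiltonian_scalar:
  assumes "k_local_hamiltonian n d 0 H"
  obtains l where "\<forall>a\<in>confs n d. \<forall>b\<in>confs n d. H a b = (if a = b then l else 0)"
proof -
  obtain m :: nat and h :: "nat \<Rightarrow> op" and S :: "nat \<Rightarrow> nat set"
    where terms: "\<forall>j<m. S j \<subseteq> {..<n} \<and> card (S j) = 0 \<and> acts_within n d (S j) (h j)"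
    and H: "op_eq (confs n d) H (\<lambda>c c'. \<Sum>j<m. h j c c')"
    using assms unfolding k_local_hamiltonian_def by auto
  have "\<forall>j\<in>{..<m}. \<exists>l. \<forall>a\<in>confs n d. \<forall>b\<in>confs n d. h j a b = (if a = b then l else 0)"
  proof
    fix j assume "j \<in> {..<m}"
    then have "finite (S j)" "card (S j) = 0" "acts_within n d (S j) (h j)"
      using terms finite_subset[of "S j" "{..<n}"] by auto
    then have "acts_within n d {} (h j)" by simp
    then obtain l where "\<forall>a\<in>confs n d. \<forall>b\<in>confs n d. h j a b = (if a = b then l else 0)"
      by (rule acts_within_empty)
    then show "\<exists>l. \<forall>a\<in>confs n d. \<forall>b\<in>confs n d. h j a b = (if a = b then l else 0)" ..
  qed
  then obtain L where L: "\<forall>j\<in>{..<m}. \<forall>a\<in>confs n d. \<forall>b\<in>confs n d. h j a b = (if a = b then L j else 0)"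
    by metis
  show ?thesis
    using H L by (intro that[of "\<Sum>j<m. L j"]) (simp add: op_eq_def if_distrib sum.If_cases)
qed

lemma zero_local_expectation_eq:
  assumes "k_local_hamiltonian n d 0 H" "vec_norm (confs n d) x = vec_norm (confs n d) v"
  shows "vec_inner (confs n d) x (op_apply (confs n d) H x) = vec_inner (confs n d) v (op_apply (confs n d) H v)"
proof -
  obtain l where l: "\<forall>a\<in>confs n d. \<forall>b\<in>confs n d. H a b = (if a = b then l else 0)"
    using assms(1) by (rule zero_local_hamiltonian_scalar)
  have "vec_inner (confs n d) w (op_apply (confs n d) H w) = vec_inner (confs n d) w (\<lambda>a. l * w a)" for w
    using op_apply_diagonal[of "confs n d" _ H "\<lambda>_. l"] finite_confs l by (intro vec_inner_cong) auto
  then show ?thesis using assms(2) by (simp add: vec_inner_scale_right vec_inner_self)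
qed

definition z_parity :: "nat \<Rightarrow> conf \<Rightarrow> real" where
  "z_parity k c = (\<Prod>i<k. if c i = 0 then 1 else -1)"

lemma ZZ_ham_eq: "ZZ_ham k J = (\<lambda>c c'. if c = c' then of_real (J * z_parity k c) else 0)"
  unfolding ZZ_ham_def z_parity_def ..

lemma abs_z_parity: "\<bar>z_parity k c\<bar> = 1"
proof -
  have "\<bar>if c i = 0 then 1 else -1 :: real\<bar> = 1" for i by simp
  then show ?thesis unfolding z_parity_def abs_prod by simp
qed

lemma z_parity_flip:
  assumes "i < k" "c i < 2"
  shows "z_parity k (flip i c) = - z_parity k c"
proof -
  have split: "z_parity k a = (if a i = 0 then 1 else -1) * (\<Prod>j\<in>{..<k}-{i}. if a j = 0 then 1 else -1)" for a
    unfolding z_parity_def using assms(1) by (subst prod.remove[of _ i]) auto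
  have "(\<Prod>j\<in>{..<k}-{i}. if flip i c j = 0 then 1 else -1) = (\<Prod>j\<in>{..<k}-{i}. if c j = 0 then 1 else (-1::real))"
    unfolding flip_def by (intro prod.cong) auto
  moreover have "flip i c i = 0 \<longleftrightarrow> c i \<noteq> 0" using assms(2) unfolding flip_def by auto
  ultimately show ?thesis unfolding split[of c] split[of "flip i c"] by auto
qed

section \<open>Cancellation of the local terms\<close>

lemma ZZ_expectation_column:
  assumes "k \<le> n" "acts_within n d {k..<n} P" "c \<in> confs n d"
  shows "vec_inner (confs n d) (column P c) (op_apply (confs n d) (ZZ_ham k J) (column P c))
         = of_real (J * z_parity k c) * vec_inner (confs n d) (column P c) (column P c)"
proof -
  let ?X = "confs n d"
  have "z_parity k a = z_parity k c" if "a \<in> ?X" "P a c \<noteq> 0" for a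
  proof -
    have "a i = c i" if "i < k" for i
      using acts_within_off_support[of n d "{k..<n}" P a c i] assms that \<open>a \<in> ?X\<close> \<open>P a c \<noteq> 0\<close>
      by simp
    then show ?thesis unfolding z_parity_def by (intro prod.cong) auto
  qed
  then have pointwise: "cnj (column P c a) * op_apply ?X (ZZ_ham k J) (column P c) a
           = of_real (J * z_parity k c) * (cnj (column P c a) * column P c a)" if "a \<in> ?X" for a
    using op_apply_diagonal[of ?X a "ZZ_ham k J" "\<lambda>a. of_real (J * z_parity k a)"] finite_confs that
    by (cases "P a c = 0") (auto simp: ZZ_ham_eq column_def)
  then show ?thesis
    unfolding vec_inner_def sum_distrib_left by (rule sum.cong[OF refl]) (simp only: pointwise)
qed

lemma expectation_column_flip:
  assumes "acts_within n d T A" "acts_within n d T' B" "i < n" "i \<notin> T" "i \<notin> T'" "d i = 2"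
    "c \<in> confs n d"
  shows "vec_inner (confs n d) (column B (flip i c)) (op_apply (confs n d) A (column B (flip i c)))
       = vec_inner (confs n d) (column B c) (op_apply (confs n d) A (column B c))"
proof -
  let ?X = "confs n d" and ?f = "flip i"
  have f: "\<forall>a\<in>?X. ?f a \<in> ?X \<and> ?f (?f a) = a" using assms flip_in_confs flip_flip by blast
  have A_flip: "A (?f a) (?f b) = A a b" and B_flip: "B (?f a) (?f c) = B a c" if "a \<in> ?X" "b \<in> ?X" for a b
    using acts_within_flip[OF assms(1,3,4,6)] acts_within_flip[OF assms(2,3,5,6)] that assms(7) by auto
  define g where "g a = cnj (B a (?f c)) * (\<Sum>b\<in>?X. A a b * B b (?f c))" for a
  have "vec_inner ?X (column B (?f c)) (op_apply ?X A (column B (?f c))) = sum g ?X"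
    unfolding vec_inner_def op_apply_def column_def g_def ..
  also have "\<dots> = sum (\<lambda>a. g (?f a)) ?X"
    by (rule sum.reindex_bij_witness[of _ ?f ?f]) (use f in auto)
  also have "\<dots> = (\<Sum>a\<in>?X. cnj (B a c) * (\<Sum>b\<in>?X. A a b * B b c))"
  proof (rule sum.cong[OF refl])
    fix a assume a: "a \<in> ?X"
    have "(\<Sum>b\<in>?X. A (?f a) b * B b (?f c)) = (\<Sum>b\<in>?X. A (?f a) (?f b) * B (?f b) (?f c))"
      by (rule sum.reindex_bij_witness[of _ ?f ?f]) (use f in auto)
    also have "\<dots> = (\<Sum>b\<in>?X. A a b * B b c)"
      using A_flip B_flip a by (intro sum.cong) auto
    finally show "g (?f a) = cnj (B a c) * (\<Sum>b\<in>?X. A a b * B b c)"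
      unfolding g_def using B_flip a by simp
  qed
  also have "\<dots> = vec_inner ?X (column B c) (op_apply ?X A (column B c))"
    unfolding vec_inner_def op_apply_def column_def ..
  finally show ?thesis .
qed

definition same_ancilla :: "nat \<Rightarrow> (nat \<Rightarrow> nat) \<Rightarrow> nat \<Rightarrow> conf \<Rightarrow> conf set" where
  "same_ancilla n d k c0 = {c \<in> confs n d. \<forall>i\<ge>k. c i = c0 i}"

lemma local_term_sign_sum_zero:
  assumes "k \<le> n" "\<forall>i<k. d i = 2" "acts_within n d S h" "\<not> {..<k} \<subseteq> S"
    and "acts_within n d {k..<n} P"
  shows "(\<Sum>c\<in>same_ancilla n d k c0. of_real (z_parity k c)
           * vec_inner (confs n d) (column P c) (op_apply (confs n d) h (column P c))) = 0"
proof -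
  obtain i where i: "i < k" "i \<notin> S" using assms(4) by auto
  then have site: "i < n" "d i = 2" "i \<notin> {k..<n}" using assms(1,2) by auto
  let ?C = "same_ancilla n d k c0"
  have conf: "c \<in> confs n d" "c i < 2" if "c \<in> ?C" for c
    using that site unfolding same_ancilla_def confs_def by auto
  have parity: "z_parity k (flip i c) = - z_parity k c" if "c \<in> ?C" for c
    using z_parity_flip[of i k c] i(1) conf(2)[OF that] by blast
  have expectation:
    "vec_inner (confs n d) (column P (flip i c)) (op_apply (confs n d) h (column P (flip i c)))
     = vec_inner (confs n d) (column P c) (op_apply (confs n d) h (column P c))" if "c \<in> ?C" for c
    using expectation_column_flip[OF assms(3,5) site(1) i(2) site(3,2) conf(1)[OF that]] .
  have involution: "flip i c \<in> ?C" "flip i (flip i c) = c" if "c \<in> ?C" for c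
    using that flip_in_confs[of i n d c] flip_flip[of i n d c] site i(1)
    unfolding same_ancilla_def flip_def[of i c] by auto
  show ?thesis
    by (rule sum_involution_eq_0[where h = "flip i"]) (simp_all add: parity expectation involution flip_neq)
qed

lemma local_hamiltonian_sign_sum_zero:
  assumes "k \<le> n" "\<forall>i<k. d i = 2" "k' < k" "k_local_hamiltonian n d k' H"
    and "acts_within n d {k..<n} P"
  shows "(\<Sum>c\<in>same_ancilla n d k c0. of_real (z_parity k c)
           * vec_inner (confs n d) (column P c) (op_apply (confs n d) H (column P c))) = 0"
proof -
  let ?X = "confs n d" and ?C = "same_ancilla n d k c0"
  obtain m :: nat and h :: "nat \<Rightarrow> op" and S :: "nat \<Rightarrow> nat set"
    where terms: "\<forall>j<m. S j \<subseteq> {..<n} \<and> card (S j) \<le> k' \<and> acts_within n d (S j) (h j)"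
      and H: "op_eq ?X H (\<lambda>c c'. \<Sum>j<m. h j c c')"
    using assms(4) unfolding k_local_hamiltonian_def by blast
  have misses: "\<not> {..<k} \<subseteq> S j" if "j < m" for j
  proof
    assume "{..<k} \<subseteq> S j"
    then have "card {..<k} \<le> card (S j)"
      using terms that finite_subset[of "S j" "{..<n}"] by (intro card_mono) auto
    then show False using terms that assms(3) by fastforce
  qed
  have split: "vec_inner ?X w (op_apply ?X H w) = (\<Sum>j<m. vec_inner ?X w (op_apply ?X (h j) w))" for w
  proof -
    have "vec_inner ?X w (op_apply ?X H w) = vec_inner ?X w (\<lambda>a. \<Sum>j<m. op_apply ?X (h j) w a)"
      using op_apply_op_eq[OF H] op_apply_sum by (intro vec_inner_cong) auto
    then show ?thesis by (simp add: vec_inner_sum_right)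
  qed
  have term_zero: "(\<Sum>c\<in>?C. of_real (z_parity k c) * vec_inner ?X (column P c) (op_apply ?X (h j) (column P c))) = 0"
    if "j < m" for j
    using terms misses that by (intro local_term_sign_sum_zero[OF assms(1,2) _ _ assms(5)]) auto
  show ?thesis
    unfolding split sum_distrib_left by (subst sum.swap) (simp add: term_zero)
qed

lemma parity_opposed_column:
  assumes "k \<le> n" "\<forall>i<k. d i = 2" "k' < k" "k_local_hamiltonian n d k' H"
    and "acts_within n d {k..<n} P" "c0 \<in> confs n d"
  obtains c where "c \<in> same_ancilla n d k c0"
    "z_parity k c * Re (vec_inner (confs n d) (column P c) (op_apply (confs n d) H (column P c))) \<le> 0"
proof (rule ccontr)
  let ?C = "same_ancilla n d k c0"
  let ?F = "\<lambda>c. vec_inner (confs n d) (column P c) (op_apply (confs n d) H (column P c))"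
  note opposed = that
  assume "\<not> thesis"
  then have "0 < z_parity k c * Re (?F c)" if "c \<in> ?C" for c
    using opposed that by force
  moreover have "finite ?C" "c0 \<in> ?C"
    using assms(6) finite_confs unfolding same_ancilla_def by simp_all
  ultimately have "0 < (\<Sum>c\<in>?C. z_parity k c * Re (?F c))"
    by (intro sum_pos) auto
  also have "\<dots> = Re (\<Sum>c\<in>?C. of_real (z_parity k c) * ?F c)"
    by simp
  also have "\<dots> = 0"
    using local_hamiltonian_sign_sum_zero[OF assms(1-5)] by simp
  finally show False by simp
qed

lemma gadget_error_nonneg: "is_gadget n d k Hext H' \<eta> \<epsilon> \<Longrightarrow> 0 \<le> \<epsilon>"
  unfolding is_gadget_def Let_def using op_norm_nonneg[OF finite_confs] order_trans by blast

lemma signed_energy_bound: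
  fixes z J q \<epsilon> :: real and G F :: complex
  assumes "\<bar>z\<bar> = 1" "cmod (G - of_real (J * z * q)) \<le> \<epsilon> * q" "z * Re F \<le> 0"
  shows "J * q \<le> \<epsilon> * q + cmod (G - F)"
proof -
  have "z = 1 \<or> z = -1" using assms(1) by (auto simp: abs_if split: if_splits)
  then have signed_Re: "z * Re w \<le> cmod w" for w
    using abs_Re_le_cmod[of w] by (auto simp: abs_le_iff)
  have "z * z = 1" using assms(1) abs_mult_self_eq[of z] by simp
  then have "J * q = z * Re F + z * Re (G - F) + z * Re (of_real (J * z * q) - G)"
    by (simp add: algebra_simps)
  moreover have "z * Re (of_real (J * z * q) - G) \<le> \<epsilon> * q"
    using signed_Re[of "of_real (J * z * q) - G"] assms(2) by (simp add: norm_minus_commute)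
  ultimately show ?thesis using signed_Re[of "G - F"] assms(3) by linarith
qed

lemma ZZ_gadget_witness:
  assumes "k \<le> n" "\<forall>i<k. d i = 2" "k' < k" "k_local_hamiltonian n d k' H'"
    and "is_gadget n d k (ZZ_ham k J) H' \<eta> \<epsilon>"
  obtains v x where "0 < vec_norm (confs n d) v" "vec_norm (confs n d) x = vec_norm (confs n d) v"
    "vec_norm (confs n d) (\<lambda>a. x a - v a) \<le> \<eta> * vec_norm (confs n d) v"
    "J * (vec_norm (confs n d) v)\<^sup>2 \<le> \<epsilon> * (vec_norm (confs n d) v)\<^sup>2
       + cmod (vec_inner (confs n d) x (op_apply (confs n d) H' x) - vec_inner (confs n d) v (op_apply (confs n d) H' v))"
proof -
  define X where "X = confs n d"
  have X: "finite X" unfolding X_def by (rule finite_confs)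
  obtain P U where P: "ancilla_projector n d k P" and U: "op_unitary X U"
    and U_near_id: "op_norm X (op_diff U op_id) \<le> \<eta>"
    and gap: "op_norm X (op_diff (op_mul X (op_mul X (op_mul X (op_mul X U P) (op_adj U)) H') (op_mul X (op_mul X U P) (op_adj U)))
                                 (op_mul X (op_mul X U (op_mul X (ZZ_ham k J) P)) (op_adj U))) \<le> \<epsilon>"
    using assms(5) unfolding is_gadget_def Let_def X_def by blast
  have P_local: "acts_within n d {k..<n} P" and P_idem: "op_eq X (op_mul X P P) P"
    and P_herm: "op_hermitian X P" and P_nonzero: "\<not> op_eq X P (\<lambda>_ _. 0)"
    using P unfolding ancilla_projector_def X_def by auto
  obtain c0 where c0: "c0 \<in> X" "0 < vec_norm X (column P c0)"
    using nonzero_op_column[OF X P_nonzero] by blast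
  obtain c where c: "c \<in> same_ancilla n d k c0"
    and opposed: "z_parity k c * Re (vec_inner X (column P c) (op_apply X H' (column P c))) \<le> 0"
    using parity_opposed_column[OF assms(1-4) P_local] c0(1) unfolding X_def by blast
  have cX: "c \<in> X" using c unfolding same_ancilla_def X_def by simp
  define v where "v = column P c"
  define x where "x = op_apply X U v"
  have "P c c = P c0 c0"
    using acts_within_diag_eq[OF P_local, of c c0] c c0(1) unfolding same_ancilla_def X_def by simp
  then have "complex_of_real ((vec_norm X v)\<^sup>2) = complex_of_real ((vec_norm X (column P c0))\<^sup>2)"
    using vec_inner_projector_column[OF P_herm P_idem] cX c0(1)
    unfolding v_def vec_inner_self[symmetric] by simp
  then have "(vec_norm X v)\<^sup>2 = (vec_norm X (column P c0))\<^sup>2"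
    by (simp only: of_real_eq_iff)
  then have v_pos: "0 < vec_norm X v" using c0(2) vec_norm_nonneg by simp
  have "vec_norm X (\<lambda>a. x a - v a) = vec_norm X (op_apply X (op_diff U op_id) v)"
    unfolding x_def op_apply_op_diff using op_apply_op_id[OF X] by (intro vec_norm_cong) simp
  also have "\<dots> \<le> \<eta> * vec_norm X v"
    using vec_norm_op_apply_le[OF X] U_near_id vec_norm_nonneg by (metis mult_right_mono order_trans)
  finally have x_near: "vec_norm X (\<lambda>a. x a - v a) \<le> \<eta> * vec_norm X v" .
  have "cmod (vec_inner X x (op_apply X H' x) - vec_inner X v (op_apply X (ZZ_ham k J) v)) \<le> \<epsilon> * (vec_norm X v)\<^sup>2"
    unfolding x_def using gadget_expectation[OF X U P_herm gap] projector_column[OF P_idem cX]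
    by (simp add: v_def)
  moreover have "vec_inner X v (op_apply X (ZZ_ham k J) v) = of_real (J * z_parity k c * (vec_norm X v)\<^sup>2)"
    using ZZ_expectation_column[OF assms(1) P_local, of c J] cX unfolding X_def v_def vec_inner_self by simp
  ultimately have "J * (vec_norm X v)\<^sup>2 \<le> \<epsilon> * (vec_norm X v)\<^sup>2
      + cmod (vec_inner X x (op_apply X H' x) - vec_inner X v (op_apply X H' v))"
    using signed_energy_bound[OF abs_z_parity] opposed unfolding v_def by simp
  then show ?thesis
    using that v_pos unitary_vec_norm[OF X U] x_near unfolding x_def X_def by blast
qed

lemma ZZ_gadget_bound:
  assumes "k \<le> n" "\<forall>i<k. d i = 2" "k' < k" "k_local_hamiltonian n d k' H'"
    and "is_gadget n d k (ZZ_ham k J) H' \<eta> \<epsilon>"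
  shows "J \<le> \<epsilon> + 2 * \<eta> * op_norm (confs n d) H'"
proof -
  let ?X = "confs n d"
  let ?N = "op_norm ?X H'"
  obtain v x where v_pos: "0 < vec_norm ?X v" and x_norm: "vec_norm ?X x = vec_norm ?X v"
    and x_near: "vec_norm ?X (\<lambda>a. x a - v a) \<le> \<eta> * vec_norm ?X v"
    and energy: "J * (vec_norm ?X v)\<^sup>2 \<le> \<epsilon> * (vec_norm ?X v)\<^sup>2
       + cmod (vec_inner ?X x (op_apply ?X H' x) - vec_inner ?X v (op_apply ?X H' v))"
    by (rule ZZ_gadget_witness[OF assms])
  have N: "0 \<le> ?N" by (rule op_norm_nonneg[OF finite_confs])
  have "cmod (vec_inner ?X x (op_apply ?X H' x) - vec_inner ?X v (op_apply ?X H' v))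
      \<le> ?N * (2 * vec_norm ?X v) * vec_norm ?X (\<lambda>a. x a - v a)"
    using cmod_expectation_diff_le[of ?X x H' v, OF finite_confs] unfolding x_norm by simp
  also have "\<dots> \<le> ?N * (2 * vec_norm ?X v) * (\<eta> * vec_norm ?X v)"
    using N v_pos x_near by (intro mult_left_mono) auto
  finally have "J * (vec_norm ?X v)\<^sup>2 \<le> (\<epsilon> + 2 * \<eta> * ?N) * (vec_norm ?X v)\<^sup>2"
    using energy by (simp add: power2_eq_square algebra_simps)
  then show ?thesis using v_pos by simp
qed

lemma ZZ_gadget_zero_local:
  assumes "k \<le> n" "\<forall>i<k. d i = 2" "0 < k" "k_local_hamiltonian n d 0 H'"
    and "is_gadget n d k (ZZ_ham k J) H' \<eta> \<epsilon>"
  shows "J \<le> \<epsilon>"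
proof -
  let ?X = "confs n d"
  obtain v x where v_pos: "0 < vec_norm ?X v" and x_norm: "vec_norm ?X x = vec_norm ?X v"
    and energy: "J * (vec_norm ?X v)\<^sup>2 \<le> \<epsilon> * (vec_norm ?X v)\<^sup>2
       + cmod (vec_inner ?X x (op_apply ?X H' x) - vec_inner ?X v (op_apply ?X H' v))"
    by (rule ZZ_gadget_witness[OF assms])
  then have "J * (vec_norm ?X v)\<^sup>2 \<le> \<epsilon> * (vec_norm ?X v)\<^sup>2"
    using zero_local_expectation_eq[OF assms(4) x_norm] by simp
  then show ?thesis using v_pos by simp
qed

theorem theorem3p3:
  fixes n k k' :: nat and d :: "nat \<Rightarrow> nat" and J \<eta> \<epsilon> :: real and H' :: op
  assumes "k \<le> n"
    and "\<forall>i<k. d i = 2"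
    and "\<forall>i. k \<le> i \<and> i < n \<longrightarrow> d i \<ge> 1"
    and "J > 0"
    and "k' < k"
    and "k_local_hamiltonian n d k' H'"
    and "is_gadget n d k (ZZ_ham k J) H' \<eta> \<epsilon>"
    and "\<epsilon> < J / 2 ^ k'"
  shows "\<eta> * op_norm (confs n d) H' \<ge> J / 2 ^ k' - \<epsilon>
         \<and> op_norm (confs n d) H' \<ge> (J / 2 ^ k' - \<epsilon>) / \<eta>"
proof -
  let ?N = "op_norm (confs n d) H'"
  have "k' \<noteq> 0"
  proof
    assume "k' = 0"
    then have "J \<le> \<epsilon>" using ZZ_gadget_zero_local[OF assms(1,2) _ _ assms(7)] assms(5,6) by simp
    then show False using assms(8) \<open>k' = 0\<close> by simp
  qed
  then have "(2::real) \<le> 2 ^ k'"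
    using power_increasing[of 1 k' "2::real"] by simp
  then have "J / 2 ^ k' \<le> J / 2"
    using assms(4) by (intro divide_left_mono) auto
  moreover have "J \<le> \<epsilon> + 2 * \<eta> * ?N"
    using ZZ_gadget_bound[OF assms(1,2,5,6,7)] .
  moreover have "0 \<le> \<epsilon>"
    using gadget_error_nonneg[OF assms(7)] .
  ultimately have lower: "J / 2 ^ k' - \<epsilon> \<le> \<eta> * ?N" by linarith
  moreover have "0 < \<eta>"
    using lower assms(8) op_norm_nonneg[of "confs n d" H', OF finite_confs] by (smt (verit) mult_nonpos_nonneg)
  ultimately show ?thesis by (simp add: pos_divide_le_eq mult.commute)
qed

end
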